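(* Let $\{\Theta_{kj}\}_{k,j\in[K]}$ be i.i.d. uniform on $[-\pi,\pi)$. Let $G$ be the graph on vertex set $[K]$ in which distinct $k,j$ are adjacent if and only if $|\cos(\Theta_{kj}-\Theta_{jj})|>\frac{\pi}{\sqrt{\ln K}}$ or $|\cos(\Theta_{jk}-\Theta_{kk})|>\frac{\pi}{\sqrt{\ln K}}$. Consider the greedy coloring algorithm that colors vertices sequentially in the order $1,2,\dots,K$, giving each vertex the first color (colors being $1,2,3,\dots$) not used by any of its already colored neighbors. Then, with probability tending to $1$ as $K\to\infty$, the greedy algorithm colors $G$ with at most $\frac{K\ln\ln K}{\ln K-3\ln\ln K}+1$ colors.
   Context: The probability is over the random phases $\{\Theta_{kj}\}$. $\ln$ denotes the natural logarithm. *)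

theory Defs
  imports "HOL-Probability.Probability"
begin

definition phase_space :: "nat \<Rightarrow> (nat \<times> nat \<Rightarrow> real) measure" where
  "phase_space K = PiM ({1..K} \<times> {1..K}) (\<lambda>_. uniform_measure lborel {-pi..<pi})"

definition adjG :: "nat \<Rightarrow> (nat \<times> nat \<Rightarrow> real) \<Rightarrow> nat \<Rightarrow> nat \<Rightarrow> bool" where
  "adjG K \<Theta> k j \<longleftrightarrow> k \<noteq> j \<and>
     (\<bar>cos (\<Theta> (k, j) - \<Theta> (j, j))\<bar> > pi / sqrt (ln (real K)) \<or>
      \<bar>cos (\<Theta> (j, k) - \<Theta> (k, k))\<bar> > pi / sqrt (ln (real K)))"

text \<open>Greedy colouring in the order 1,2,...,n: vertex i gets the least colour m \<ge> 1
  not used by any already coloured neighbour j \<in> {1..i-1}. Uncoloured vertices get 0.\<close>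
fun greedy_col :: "(nat \<Rightarrow> nat \<Rightarrow> bool) \<Rightarrow> nat \<Rightarrow> nat \<Rightarrow> nat" where
  "greedy_col adj 0 = (\<lambda>_. 0)"
| "greedy_col adj (Suc n) =
     (let c = greedy_col adj n
      in c(Suc n := (LEAST m. m \<ge> 1 \<and> (\<forall>j\<in>{1..n}. adj (Suc n) j \<longrightarrow> c j \<noteq> m))))"

definition greedy_num_colors :: "(nat \<Rightarrow> nat \<Rightarrow> bool) \<Rightarrow> nat \<Rightarrow> nat" where
  "greedy_num_colors adj K = card (greedy_col adj K ` {1..K})"

end

theory Submission
  imports Defs "HOL-Real_Asymp.Real_Asymp"
begin

text \<open>
  Greedy colouring gives vertex v a colour larger than M only if every colour 1, ..., M occurs
  among its earlier neighbours. Fix all phases except Theta(v,j) and Theta(j,v) for j < v: this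
  fixes the colouring of 1, ..., v - 1, and every earlier j is then non-adjacent to v independently
  with probability at least (t/pi)^2 = 1/ln K, where t = pi/sqrt(ln K). Hence the colour class S_i
  contains a neighbour of v with probability at most 1 - (ln K)^(-|S_i|), independently in i, and
  by AM-GM all M classes do so with probability at most exp(-M (ln K)^(-K/M)). For
  M >= K ln ln K / (ln K - 2 ln ln K) this is at most 1/K^2, and a union bound over the vertices
  bounds the failure probability by 1/K.
\<close>

section \<open>Greedy colouring\<close>

lemma greedy_col_stable: "v \<le> n \<Longrightarrow> greedy_col adj n v = greedy_col adj v v"
proof (induction n)
  case (Suc n)
  then show ?case by (cases "v = Suc n") (auto simp: Let_def)
qed simp

lemma greedy_col_cong:
  assumes "\<And>a b. a \<in> {1..n} \<Longrightarrow> b \<in> {1..n} \<Longrightarrow> adj a b = adj' a b"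
  shows "greedy_col adj n = greedy_col adj' n"
  using assms
proof (induction n)
  case (Suc n)
  then have "greedy_col adj n = greedy_col adj' n" by simp
  moreover have "adj (Suc n) j = adj' (Suc n) j" if "j \<in> {1..n}" for j
    using Suc.prems that by simp
  ultimately show ?case by (simp add: Let_def)
qed simp

definition colours_blocked :: "(nat \<Rightarrow> nat \<Rightarrow> bool) \<Rightarrow> nat \<Rightarrow> nat \<Rightarrow> bool" where
  "colours_blocked adj M v \<longleftrightarrow>
     (\<forall>i\<in>{1..M}. \<exists>j\<in>{1..v - 1}. adj v j \<and> greedy_col adj (v - 1) j = i)"

lemma greedy_col_le_if_not_blocked:
  assumes "\<not> colours_blocked adj M v" "v \<ge> 1"
  shows "greedy_col adj v v \<le> M"
proof -
  obtain n where v: "v = Suc n" using assms(2) by (cases v) auto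
  from assms(1) obtain i where i: "i \<in> {1..M}"
    and free: "\<forall>j\<in>{1..n}. adj (Suc n) j \<longrightarrow> greedy_col adj n j \<noteq> i"
    unfolding colours_blocked_def v by auto
  have "(LEAST m. m \<ge> 1 \<and> (\<forall>j\<in>{1..n}. adj (Suc n) j \<longrightarrow> greedy_col adj n j \<noteq> m)) \<le> i"
    by (rule Least_le) (use i free in auto)
  then show ?thesis using i by (simp add: v Let_def)
qed

lemma greedy_num_colors_le:
  assumes "\<forall>v\<in>{1..K}. \<not> colours_blocked adj M v"
  shows "greedy_num_colors adj K \<le> M + 1"
proof -
  have "greedy_col adj K v \<le> M" if "v \<in> {1..K}" for v
    using that assms greedy_col_le_if_not_blocked[of adj M v] greedy_col_stable[of v K adj] by simp
  then have "greedy_col adj K ` {1..K} \<subseteq> {0..M}" by auto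
  then have "card (greedy_col adj K ` {1..K}) \<le> card {0..M}" by (intro card_mono) auto
  then show ?thesis by (simp add: greedy_num_colors_def)
qed

section \<open>Independent blocks of coordinates in a finite product\<close>

lemma (in finite_product_prob_space) measure_PiM_restrict_blocks:
  assumes "I \<noteq> {}" "finite F" "F \<noteq> {}" and D: "\<And>i. i \<in> F \<Longrightarrow> D i \<subseteq> I"
    and disj: "disjoint_family_on D F" and Q: "\<And>i. i \<in> F \<Longrightarrow> Q i \<in> sets (PiM (D i) M)"
  shows "measure (PiM I M) {y \<in> space (PiM I M). \<forall>i\<in>F. restrict y (D i) \<in> Q i}
       = (\<Prod>i\<in>F. measure (PiM (D i) M) (Q i))"
proof -
  have components: "indep_vars M (\<lambda>p \<omega>. \<omega> p) I"
  proof (subst indep_vars_iff_distr_eq_PiM'[OF \<open>I \<noteq> {}\<close>])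
    show "random_variable (M p) (\<lambda>\<omega>. \<omega> p)" if "p \<in> I" for p
      using that by (rule measurable_component_singleton)
    have "distr (PiM I M) (PiM I M) (\<lambda>x. restrict x I) = PiM I M"
      by (rule distr_PiM_restrict_finite) (auto simp: finite_index)
    also have "PiM I M = PiM I (\<lambda>i. distr (PiM I M) (M i) (\<lambda>\<omega>. \<omega> i))"
      by (intro PiM_cong refl) (simp add: PiM_component)
    finally show "distr (PiM I M) (PiM I M) (\<lambda>x. \<lambda>i\<in>I. x i)
        = PiM I (\<lambda>i. distr (PiM I M) (M i) (\<lambda>\<omega>. \<omega> i))"
      by (simp add: restrict_def)
  qed
  have blocks: "indep_vars (\<lambda>i. PiM (D i) M) (\<lambda>i \<omega>. restrict (\<lambda>p. \<omega> p) (D i)) F"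
    by (rule indep_vars_restrict[OF components D disj])
  have "{y \<in> space (PiM I M). \<forall>i\<in>F. restrict y (D i) \<in> Q i}
      = (\<Inter>i\<in>F. (\<lambda>\<omega>. restrict (\<lambda>p. \<omega> p) (D i)) -` Q i \<inter> space (PiM I M))"
    using \<open>F \<noteq> {}\<close> by auto
  also have "measure (PiM I M) \<dots>
      = (\<Prod>i\<in>F. measure (PiM I M) (prod_emb I M (D i) (Q i)))"
    by (subst indep_varsD[OF blocks \<open>F \<noteq> {}\<close> \<open>finite F\<close> subset_refl Q])
       (auto simp: prod_emb_def space_PiM)
  also have "\<dots> = (\<Prod>i\<in>F. measure (PiM (D i) M) (Q i))"
    using D Q finite_subset[OF D finite_index]
    by (intro prod.cong refl) (simp add: measure_def emeasure_PiM_emb')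
  finally show ?thesis .
qed

lemma (in finite_product_prob_space) measure_PiM_blocks_leave_boxes:
  assumes "I \<noteq> {}" "finite F" "F \<noteq> {}" and D: "\<And>i. i \<in> F \<Longrightarrow> D i \<subseteq> I"
    and disj: "disjoint_family_on D F" and T: "\<And>p. p \<in> I \<Longrightarrow> T p \<in> sets (M p)"
  shows "measure (PiM I M) {y \<in> space (PiM I M). \<forall>i\<in>F. \<exists>p\<in>D i. y p \<notin> T p}
       = (\<Prod>i\<in>F. 1 - (\<Prod>p\<in>D i. measure (M p) (T p)))"
proof -
  have fin: "finite (D i)" if "i \<in> F" for i using finite_subset[OF D[OF that] finite_index] .
  define Q where "Q i = space (PiM (D i) M) - PiE (D i) T" for i
  have box: "PiE (D i) T \<in> sets (PiM (D i) M)" if "i \<in> F" for i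
    using that D T fin by (intro sets_PiM_I_finite) auto
  have "{y \<in> space (PiM I M). \<forall>i\<in>F. \<exists>p\<in>D i. y p \<notin> T p}
      = {y \<in> space (PiM I M). \<forall>i\<in>F. restrict y (D i) \<in> Q i}"
    using D by (fastforce simp: Q_def space_PiM PiE_iff)
  also have "measure (PiM I M) \<dots> = (\<Prod>i\<in>F. measure (PiM (D i) M) (Q i))"
    using assms box by (intro measure_PiM_restrict_blocks) (auto simp: Q_def)
  also have "\<dots> = (\<Prod>i\<in>F. 1 - (\<Prod>p\<in>D i. measure (M p) (T p)))"
  proof (intro prod.cong refl)
    fix i assume i: "i \<in> F"
    interpret block: finite_product_prob_space M "D i"
      by unfold_locales (rule fin[OF i])
    show "measure (PiM (D i) M) (Q i) = 1 - (\<Prod>p\<in>D i. measure (M p) (T p))"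
      unfolding Q_def using i D T
      by (subst block.prob_compl[OF box[OF i]], subst block.prob_times) auto
  qed
  finally show ?thesis .
qed

section \<open>Uniform phases\<close>

abbreviation uniform_phase :: "real measure" where
  "uniform_phase \<equiv> uniform_measure lborel {-pi..<pi}"

lemma prob_space_uniform_phase: "prob_space uniform_phase"
  by (rule prob_space_uniform_measure) auto

lemma finite_product_prob_space_uniform_phase:
  "finite I \<Longrightarrow> finite_product_prob_space (\<lambda>_. uniform_phase) I"
  by (simp add: finite_product_prob_space_def finite_product_sigma_finite_def
      finite_product_sigma_finite_axioms_def product_prob_space_def product_prob_space_axioms_def
      product_sigma_finite_def prob_space_uniform_phase prob_space_imp_sigma_finite)

definition small_cos :: "real \<Rightarrow> real \<Rightarrow> real set" where
  "small_cos t a = {\<theta>. \<bar>cos (\<theta> - a)\<bar> \<le> t}"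

lemma small_cos_borel [measurable]: "small_cos t a \<in> sets borel"
  unfolding small_cos_def by measurable

lemma measure_uniform_phase_small_cos:
  assumes t: "0 < t" "t \<le> pi / 2"
  shows "t / pi \<le> measure uniform_phase (small_cos t a)"
proof -
  define k where "k = \<lfloor>(a + pi) / pi\<rfloor>"
  define c where "c = a + pi / 2 - pi * of_int k"
  have "pi * of_int k \<le> a + pi" "a + pi < pi * of_int k + pi"
    using floor_divide_lower[of pi "a + pi"] floor_divide_upper[of pi "a + pi"]
    by (simp_all add: k_def algebra_simps)
  then have c: "-pi / 2 \<le> c" "c < pi / 2" unfolding c_def by linarith+
  have cos_sin: "\<bar>cos (\<theta> - a)\<bar> = \<bar>sin (\<theta> - c)\<bar>" for \<theta>
  proof -
    have "\<theta> - a = (\<theta> - c) + pi / 2 - pi * of_int k" unfolding c_def by simp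
    moreover have "\<bar>cos (y + pi / 2 - pi * of_int k)\<bar> = \<bar>sin y\<bar>" for y
      by (simp add: cos_diff cos_add)
    ultimately show ?thesis by metis
  qed
  have interval: "{c - t..c + t} \<subseteq> {-pi..<pi} \<inter> small_cos t a"
  proof
    fix \<theta> assume "\<theta> \<in> {c - t..c + t}"
    moreover have "\<bar>sin (\<theta> - c)\<bar> \<le> \<bar>\<theta> - c\<bar>" by (rule abs_sin_x_le_abs_x)
    ultimately show "\<theta> \<in> {-pi..<pi} \<inter> small_cos t a"
      using c t by (auto simp: small_cos_def cos_sin)
  qed
  have "{-pi..<pi} \<inter> small_cos t a \<in> fmeasurable lborel"
    by (rule fmeasurableI2[of "{-pi..pi}"]) (auto simp: fmeasurable_compact)
  then have "measure lborel {c - t..c + t} \<le> measure lborel ({-pi..<pi} \<inter> small_cos t a)"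
    by (intro measure_mono_fmeasurable[OF interval]) auto
  then have "2 * t \<le> measure lborel ({-pi..<pi} \<inter> small_cos t a)"
    using t by simp
  then show ?thesis
    using pi_gt_zero by (simp add: measure_uniform_measure field_simps)
qed

lemma adjG_iff_small_cos:
  "adjG K \<Theta> k j \<longleftrightarrow> k \<noteq> j \<and>
     (\<Theta> (k, j) \<notin> small_cos (pi / sqrt (ln (real K))) (\<Theta> (j, j)) \<or>
      \<Theta> (j, k) \<notin> small_cos (pi / sqrt (ln (real K))) (\<Theta> (k, k)))"
  by (auto simp: adjG_def small_cos_def)

lemma measurable_component_uniform [measurable]:
  "(\<lambda>\<omega>. \<omega> p) \<in> borel_measurable (PiM I (\<lambda>_. uniform_measure lborel (S :: real set)))"
proof (cases "p \<in> I")
  case True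
  then show ?thesis by (simp add: measurable_component_singleton)
next
  case False
  have "(\<lambda>\<omega>. \<omega> p) \<in> borel_measurable (PiM I (\<lambda>_. uniform_measure lborel (S :: real set)))
      \<longleftrightarrow> (\<lambda>\<omega>. undefined :: real) \<in> borel_measurable (PiM I (\<lambda>_. uniform_measure lborel (S :: real set)))"
    by (rule measurable_cong) (use False in \<open>auto simp: space_PiM PiE_def extensional_def\<close>)
  then show ?thesis by simp
qed

lemma pred_adjG [measurable]:
  "Measurable.pred (PiM I (\<lambda>_. uniform_measure lborel (S :: real set))) (\<lambda>\<omega>. adjG K \<omega> k j)"
  unfolding adjG_def by measurable

lemma measurable_greedy_col [measurable]:
  "(\<lambda>\<omega>. greedy_col (adjG K \<omega>) n j)
     \<in> measurable (PiM I (\<lambda>_. uniform_measure lborel (S :: real set))) (count_space UNIV)"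
proof (induction n arbitrary: j)
  case (Suc n)
  note Suc [measurable]
  have "(\<lambda>\<omega>. LEAST m. 1 \<le> m \<and> (\<forall>j'\<in>{1..n}. adjG K \<omega> (Suc n) j' \<longrightarrow> greedy_col (adjG K \<omega>) n j' \<noteq> m))
     \<in> measurable (PiM I (\<lambda>_. uniform_measure lborel (S :: real set))) (count_space UNIV)"
    by (rule measurable_Least) measurable
  then show ?case
    using Suc[of j] by (cases "j = Suc n") (simp_all add: Let_def)
qed simp

lemma pred_colours_blocked [measurable]:
  "Measurable.pred (PiM I (\<lambda>_. uniform_measure lborel (S :: real set))) (\<lambda>\<omega>. colours_blocked (adjG K \<omega>) M v)"
  unfolding colours_blocked_def by measurable

section \<open>A single vertex needing a large colour\<close>

definition phases_to_earlier :: "nat \<Rightarrow> (nat \<times> nat) set" where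
  "phases_to_earlier v = (\<lambda>j. (v, j)) ` {1..v - 1} \<union> (\<lambda>j. (j, v)) ` {1..v - 1}"

lemma colours_blocked_merge_iff:
  fixes K v M :: nat and x y :: "nat \<times> nat \<Rightarrow> real"
  defines "B \<equiv> phases_to_earlier v"
  defines "A \<equiv> {1..K} \<times> {1..K} - B"
  defines "t \<equiv> pi / sqrt (ln (real K))"
  assumes v: "v \<le> K"
  shows "colours_blocked (adjG K (merge A B (x, y))) M v \<longleftrightarrow>
    (\<forall>i\<in>{1..M}. \<exists>j\<in>{1..v - 1}. greedy_col (adjG K x) (v - 1) j = i \<and>
       (y (v, j) \<notin> small_cos t (x (j, j)) \<or> y (j, v) \<notin> small_cos t (x (v, v))))"
proof -
  define n where "n = v - 1"
  have B: "B = (\<lambda>j. (v, j)) ` {1..n} \<union> (\<lambda>j. (j, v)) ` {1..n}"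
    by (simp add: B_def n_def phases_to_earlier_def)
  have in_A: "(a, b) \<in> A" if "a \<in> {1..n}" "b \<in> {1..n}" for a b
    using that v by (auto simp: A_def B n_def)
  have diag_A: "(v, v) \<in> A" "(j, j) \<in> A" if "j \<in> {1..n}" for j
    using that v by (auto simp: A_def B n_def)
  have in_B: "(v, j) \<in> B" "(j, v) \<in> B" if "j \<in> {1..n}" for j
    using that by (auto simp: B)
  have merge_A: "merge A B (x, y) p = x p" if "p \<in> A" for p
    using that by (simp add: merge_def)
  have merge_B: "merge A B (x, y) p = y p" if "p \<in> B" for p
    using that by (simp add: merge_def A_def)
  have "greedy_col (adjG K (merge A B (x, y))) n = greedy_col (adjG K x) n"
    by (rule greedy_col_cong) (simp add: adjG_def merge_A in_A)
  moreover have "adjG K (merge A B (x, y)) v j \<longleftrightarrow>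
      y (v, j) \<notin> small_cos t (x (j, j)) \<or> y (j, v) \<notin> small_cos t (x (v, v))"
    if "j \<in> {1..n}" for j
    using that by (auto simp: adjG_iff_small_cos t_def n_def merge_A merge_B in_B diag_A)
  ultimately show ?thesis
    unfolding colours_blocked_def n_def[symmetric] by auto
qed

lemma pi_div_sqrt_bounds:
  fixes L :: real
  assumes "4 \<le> L"
  shows "0 < pi / sqrt L" "pi / sqrt L \<le> pi / 2" "(pi / sqrt L / pi) ^ 2 = 1 / L"
proof -
  have sqrt: "2 \<le> sqrt L" using real_sqrt_le_mono[OF assms] by simp
  then show "0 < pi / sqrt L" by (intro divide_pos_pos pi_gt_zero) linarith
  show "pi / sqrt L \<le> pi / 2" using sqrt pi_gt_zero by (intro frac_le) auto
  show "(pi / sqrt L / pi) ^ 2 = 1 / L" using assms by (simp add: power_divide)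
qed

lemma prod_measure_small_cos_bounds:
  fixes S :: "nat set" and v :: nat
  defines "D \<equiv> (\<lambda>j. (v, j)) ` S \<union> (\<lambda>j. (j, v)) ` S"
  assumes "finite S" "0 < t" "t \<le> pi / 2"
  shows "((t / pi) ^ 2) ^ card S \<le> (\<Prod>p\<in>D. measure uniform_phase (small_cos t (a p)))"
    and "(\<Prod>p\<in>D. measure uniform_phase (small_cos t (a p))) \<le> 1"
proof -
  have "card D \<le> card ((\<lambda>j. (v, j)) ` S) + card ((\<lambda>j. (j, v)) ` S)"
    unfolding D_def by (rule card_Un_le)
  also have "\<dots> \<le> 2 * card S"
    using card_image_le[OF assms(2), of "\<lambda>j. (v, j)"] card_image_le[OF assms(2), of "\<lambda>j. (j, v)"] by simp
  finally have "((t / pi) ^ 2) ^ card S \<le> (t / pi) ^ card D"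
    using assms pi_gt_zero by (simp add: power_mult[symmetric] power_decreasing)
  also have "\<dots> \<le> (\<Prod>p\<in>D. measure uniform_phase (small_cos t (a p)))"
    using assms measure_uniform_phase_small_cos[OF assms(3,4)]
    by (subst prod_constant[symmetric], intro prod_mono) (auto simp del: measure_uniform_measure)
  finally show "((t / pi) ^ 2) ^ card S \<le> (\<Prod>p\<in>D. measure uniform_phase (small_cos t (a p)))" .
  show "(\<Prod>p\<in>D. measure uniform_phase (small_cos t (a p))) \<le> 1"
    by (intro prod_le_1 conjI measure_nonneg prob_space.prob_le_1[OF prob_space_uniform_phase])
qed

lemma prod_one_minus_power_le_exp:
  fixes q :: real and s :: "'i \<Rightarrow> nat"
  assumes q: "0 < q" "q \<le> 1" and F: "finite F" "F \<noteq> {}" and s: "(\<Sum>i\<in>F. s i) \<le> n"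
  shows "(\<Prod>i\<in>F. 1 - q ^ s i) \<le> exp (- (real (card F) * q powr (real n / real (card F))))"
proof -
  let ?m = "real (card F)"
  have m: "?m > 0" using F by (simp add: card_gt_0_iff)
  have "(\<Prod>i\<in>F. 1 - q ^ s i) \<le> (\<Prod>i\<in>F. exp (- (q ^ s i)))"
  proof (rule prod_mono)
    fix i
    show "0 \<le> 1 - q ^ s i \<and> 1 - q ^ s i \<le> exp (- (q ^ s i))"
      using q exp_ge_add_one_self[of "- (q ^ s i)"] by (simp add: power_le_one)
  qed
  also have "\<dots> = exp (- (\<Sum>i\<in>F. q ^ s i))" using F(1) by (simp only: sum_negf[symmetric] exp_sum)
  also have "\<dots> \<le> exp (- (?m * q powr (real n / ?m)))"
  proof -
    have "q ^ n \<le> q ^ (\<Sum>i\<in>F. s i)" using s q by (intro power_decreasing) auto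
    also have "\<dots> = (\<Prod>i\<in>F. q ^ s i)" by (simp add: power_sum)
    finally have "(q ^ n) powr (1 / ?m) \<le> (\<Prod>i\<in>F. q ^ s i) powr (1 / ?m)"
      using q m by (intro powr_mono2) auto
    moreover have "q powr (real n / ?m) = (q ^ n) powr (1 / ?m)"
      using q by (simp add: powr_realpow[symmetric] powr_powr)
    ultimately have "q powr (real n / ?m) \<le> (\<Prod>i\<in>F. q ^ s i) powr (1 / ?m)" by simp
    also have "\<dots> \<le> (\<Sum>i\<in>F. q ^ s i / ?m)"
      using arith_geom_mean[of F "\<lambda>i. q ^ s i"] F q by simp
    finally have "?m * q powr (real n / ?m) \<le> (\<Sum>i\<in>F. q ^ s i)"
      using m by (simp add: sum_divide_distrib[symmetric] field_simps)
    then show ?thesis by simp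
  qed
  finally show ?thesis .
qed

lemma measure_colours_blocked_slice_le:
  fixes K v M :: nat and x :: "nat \<times> nat \<Rightarrow> real"
  defines "B \<equiv> phases_to_earlier v"
  defines "A \<equiv> {1..K} \<times> {1..K} - B"
  assumes K: "4 \<le> ln (real K)" and v: "v \<in> {2..K}" and M: "1 \<le> M"
  shows "measure (PiM B (\<lambda>_. uniform_phase))
           {y \<in> space (PiM B (\<lambda>_. uniform_phase)). colours_blocked (adjG K (merge A B (x, y))) M v}
         \<le> exp (- (real M * (1 / ln (real K)) powr (real K / real M)))"
proof -
  define n where "n = v - 1"
  define t where "t = pi / sqrt (ln (real K))"
  define q where "q = 1 / ln (real K)"
  define S where "S i = {j \<in> {1..n}. greedy_col (adjG K x) n j = i}" for i
  define D where "D i = (\<lambda>j. (v, j)) ` S i \<union> (\<lambda>j. (j, v)) ` S i" for i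
  \<comment> \<open>For both \<open>(v, j)\<close> and \<open>(j, v)\<close> the phase is compared with the diagonal phase of the second index.\<close>
  define T where "T p = small_cos t (x (snd p, snd p))" for p :: "nat \<times> nat"
  have n: "1 \<le> n" "n < v" "v \<le> K" using v by (auto simp: n_def)
  have B: "B = (\<lambda>j. (v, j)) ` {1..n} \<union> (\<lambda>j. (j, v)) ` {1..n}"
    by (simp add: B_def n_def phases_to_earlier_def)
  have t: "0 < t" "t \<le> pi / 2" and q: "(t / pi) ^ 2 = q"
    using pi_div_sqrt_bounds[OF K] by (simp_all add: t_def q_def)
  have q01: "0 < q" "q \<le> 1" using K by (simp_all add: q_def)
  have "colours_blocked (adjG K (merge A B (x, y))) M v \<longleftrightarrow>
      (\<forall>i\<in>{1..M}. \<exists>j\<in>{1..n}. greedy_col (adjG K x) n j = i \<and> (y (v, j) \<notin> T (v, j) \<or> y (j, v) \<notin> T (j, v)))"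
    for y unfolding A_def B_def T_def t_def n_def using colours_blocked_merge_iff[OF n(3)] by simp
  moreover have "(\<exists>j\<in>{1..n}. greedy_col (adjG K x) n j = i \<and> (y (v, j) \<notin> T (v, j) \<or> y (j, v) \<notin> T (j, v)))
      \<longleftrightarrow> (\<exists>p\<in>D i. y p \<notin> T p)" for y i
    by (auto simp: D_def S_def)
  ultimately have "colours_blocked (adjG K (merge A B (x, y))) M v \<longleftrightarrow> (\<forall>i\<in>{1..M}. \<exists>p\<in>D i. y p \<notin> T p)" for y
    by simp
  then have "{y \<in> space (PiM B (\<lambda>_. uniform_phase)). colours_blocked (adjG K (merge A B (x, y))) M v}
      = {y \<in> space (PiM B (\<lambda>_. uniform_phase)). \<forall>i\<in>{1..M}. \<exists>p\<in>D i. y p \<notin> T p}"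
    by simp
  also have "measure (PiM B (\<lambda>_. uniform_phase)) \<dots>
      = (\<Prod>i\<in>{1..M}. 1 - (\<Prod>p\<in>D i. measure uniform_phase (T p)))"
  proof (rule finite_product_prob_space.measure_PiM_blocks_leave_boxes)
    show "finite_product_prob_space (\<lambda>_. uniform_phase) B"
      by (rule finite_product_prob_space_uniform_phase) (simp add: B)
    show "disjoint_family_on D {1..M}"
      using n by (auto simp: disjoint_family_on_def D_def S_def)
    show "B \<noteq> {}" using n by (auto simp: B)
    show "D i \<subseteq> B" for i by (auto simp: B D_def S_def)
    show "T p \<in> sets uniform_phase" for p by (simp add: T_def)
  qed (use M in auto)
  also have "\<dots> \<le> (\<Prod>i\<in>{1..M}. 1 - q ^ card (S i))"
  proof (rule prod_mono)
    fix i
    have "finite (S i)" by (simp add: S_def)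
    from prod_measure_small_cos_bounds[OF this t, where v = v and a = "\<lambda>p. x (snd p, snd p)"]
    show "0 \<le> 1 - (\<Prod>p\<in>D i. measure uniform_phase (T p)) \<and>
        1 - (\<Prod>p\<in>D i. measure uniform_phase (T p)) \<le> 1 - q ^ card (S i)"
      by (simp add: T_def q D_def del: measure_uniform_measure)
  qed
  also have "\<dots> \<le> exp (- (real M * q powr (real K / real M)))"
  proof -
    have "(\<Sum>i\<in>{1..M}. card (S i)) = card (\<Union>i\<in>{1..M}. S i)"
      by (rule card_UN_disjoint[symmetric]) (auto simp: S_def)
    also have "\<dots> \<le> card {1..n}" by (rule card_mono) (auto simp: S_def)
    also have "\<dots> \<le> K" using n by simp
    finally show ?thesis
      using prod_one_minus_power_le_exp[OF q01, of "{1..M}"] M by simp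
  qed
  finally show ?thesis by (simp add: q_def)
qed

lemma measure_colours_blocked_le:
  fixes K v M :: nat
  assumes K: "4 \<le> ln (real K)" and v: "v \<in> {1..K}" and M: "1 \<le> M"
  shows "measure (phase_space K) {\<Theta> \<in> space (phase_space K). colours_blocked (adjG K \<Theta>) M v}
         \<le> exp (- (real M * (1 / ln (real K)) powr (real K / real M)))"
    (is "measure _ ?E \<le> ?\<beta>")
proof (cases "v = 1")
  case True
  then have "?E = {}" using M by (auto simp: colours_blocked_def)
  then show ?thesis by (simp only: measure_empty) simp
next
  case False
  define B where "B = phases_to_earlier v"
  define A where "A = {1..K} \<times> {1..K} - B"
  interpret product_sigma_finite "\<lambda>_ :: nat \<times> nat. uniform_phase"
    by (simp add: product_sigma_finite_def prob_space_uniform_phase prob_space_imp_sigma_finite)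
  have \<Omega>: "phase_space K = PiM (A \<union> B) (\<lambda>_. uniform_phase)"
    using v by (auto simp: phase_space_def A_def B_def phases_to_earlier_def intro!: arg_cong2[where f = PiM])
  have disj: "A \<inter> B = {}" by (auto simp: A_def)
  have slice: "emeasure (PiM B (\<lambda>_. uniform_phase))
      ((\<lambda>y. merge A B (x, y)) -` ?E \<inter> space (PiM B (\<lambda>_. uniform_phase))) \<le> ?\<beta>"
    if x: "x \<in> space (PiM A (\<lambda>_. uniform_phase))" for x
  proof -
    interpret prob_space "PiM B (\<lambda>_. uniform_phase)"
      by (rule prob_space_PiM[OF prob_space_uniform_phase])
    have "(\<lambda>y. merge A B (x, y)) -` ?E \<inter> space (PiM B (\<lambda>_. uniform_phase))
        = {y \<in> space (PiM B (\<lambda>_. uniform_phase)). colours_blocked (adjG K (merge A B (x, y))) M v}"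
      using x disj by (auto simp: \<Omega> space_PiM PiE_def)
    moreover have "measure (PiM B (\<lambda>_. uniform_phase)) \<dots> \<le> ?\<beta>"
      using measure_colours_blocked_slice_le[OF K _ M, of v x] v False
      by (simp add: A_def B_def)
    ultimately show ?thesis by (simp add: emeasure_eq_measure)
  qed
  interpret prob_space "phase_space K"
    unfolding phase_space_def by (rule prob_space_PiM[OF prob_space_uniform_phase])
  have "emeasure (phase_space K) ?E
      = (\<integral>\<^sup>+x. emeasure (PiM B (\<lambda>_. uniform_phase))
           ((\<lambda>y. merge A B (x, y)) -` ?E \<inter> space (PiM B (\<lambda>_. uniform_phase))) \<partial>PiM A (\<lambda>_. uniform_phase))"
    unfolding \<Omega> by (rule emeasure_fold_integral) (use disj in \<open>auto simp: A_def B_def phases_to_earlier_def \<Omega>[symmetric]\<close>)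
  also have "\<dots> \<le> (\<integral>\<^sup>+x. ?\<beta> \<partial>PiM A (\<lambda>_. uniform_phase))"
    by (intro nn_integral_mono slice)
  also have "\<dots> = ?\<beta>"
    by (simp add: prob_space.emeasure_space_1[OF prob_space_PiM[OF prob_space_uniform_phase]])
  finally show ?thesis by (simp add: emeasure_eq_measure)
qed

section \<open>The number of colours\<close>

lemma measurable_map_list:
  fixes f :: "'a \<Rightarrow> 'b \<Rightarrow> 'c::countable"
  assumes "\<And>j. (\<lambda>\<omega>. f \<omega> j) \<in> measurable N (count_space UNIV)"
  shows "(\<lambda>\<omega>. map (f \<omega>) xs) \<in> measurable N (count_space UNIV)"
proof (induction xs)
  case (Cons a xs)
  have "(\<lambda>\<omega>. i # map (f \<omega>) xs) \<in> measurable N (count_space UNIV)" for i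
    by (rule measurable_compose[OF Cons, of "\<lambda>l. i # l"]) simp
  from measurable_compose_countable[OF this assms] show ?case by simp
qed simp

lemma measurable_greedy_num_colors:
  "(\<lambda>\<omega>. greedy_num_colors (adjG K \<omega>) K)
     \<in> measurable (PiM I (\<lambda>_. uniform_measure lborel (S :: real set))) (count_space UNIV)"
proof -
  have "set [1..<K + 1] = {1..K}" by auto
  then have colors: "greedy_num_colors (adjG K \<omega>) K
      = card (set (map (greedy_col (adjG K \<omega>) K) [1..<K + 1]))" for \<omega>
    by (simp only: greedy_num_colors_def set_map)
  have "(\<lambda>\<omega>. map (greedy_col (adjG K \<omega>) K) [1..<K + 1])
      \<in> measurable (PiM I (\<lambda>_. uniform_measure lborel S)) (count_space UNIV)"
    by (rule measurable_map_list) (rule measurable_greedy_col)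
  then have "(\<lambda>\<omega>. card (set (map (greedy_col (adjG K \<omega>) K) [1..<K + 1])))
      \<in> measurable (PiM I (\<lambda>_. uniform_measure lborel S)) (count_space UNIV)"
    by (rule measurable_compose) simp
  then show ?thesis unfolding colors .
qed

lemma sets_greedy_num_colors:
  "{\<Theta> \<in> space (phase_space K). P (greedy_num_colors (adjG K \<Theta>) K)} \<in> sets (phase_space K)"
  using measurable_sets[OF measurable_greedy_num_colors, of "{k. P k}"]
  by (simp add: phase_space_def vimage_def Int_def conj_commute)

lemma prob_greedy_num_colors_le:
  fixes K M :: nat
  assumes K: "4 \<le> ln (real K)" and M: "1 \<le> M"
  shows "1 - real K * exp (- (real M * (1 / ln (real K)) powr (real K / real M)))
         \<le> measure (phase_space K) {\<Theta> \<in> space (phase_space K). greedy_num_colors (adjG K \<Theta>) K \<le> M + 1}"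
    (is "1 - real K * ?\<beta> \<le> measure _ ?G")
proof -
  interpret prob_space "phase_space K"
    unfolding phase_space_def by (rule prob_space_PiM[OF prob_space_uniform_phase])
  define Bad where "Bad v = {\<Theta> \<in> space (phase_space K). colours_blocked (adjG K \<Theta>) M v}" for v
  have Bad_sets: "Bad v \<in> events" for v
    unfolding Bad_def phase_space_def by measurable
  have "prob (\<Union>v\<in>{1..K}. Bad v) \<le> (\<Sum>v\<in>{1..K}. prob (Bad v))"
    by (rule finite_measure_subadditive_finite) (auto simp: Bad_sets)
  also have "\<dots> \<le> (\<Sum>v\<in>{1..K}. ?\<beta>)"
    by (intro sum_mono) (use measure_colours_blocked_le[OF K _ M] in \<open>simp add: Bad_def\<close>)
  finally have "1 - real K * ?\<beta> \<le> 1 - prob (\<Union>v\<in>{1..K}. Bad v)" by simp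
  also have "\<dots> = prob (space (phase_space K) - (\<Union>v\<in>{1..K}. Bad v))"
    by (rule prob_compl[symmetric]) (auto simp: Bad_sets)
  also have "\<dots> \<le> prob ?G"
    by (rule finite_measure_mono[OF _ sets_greedy_num_colors]) (use greedy_num_colors_le[of K _ M] in \<open>auto simp: Bad_def\<close>)
  finally show ?thesis .
qed

lemma exp_neg_mult_inverse_ln_powr_le:
  fixes K :: nat and M :: real
  defines "L \<equiv> ln (real K)"
  defines "m \<equiv> real K * ln L / (L - 2 * ln L)"
  assumes L: "4 \<le> L" "1 < ln L" "0 < L - 2 * ln L" "2 * L \<le> L\<^sup>2 * ln L / (L - 2 * ln L)"
    and M: "m \<le> M"
  shows "real K * exp (- (M * (1 / L) powr (real K / M))) \<le> 1 / real K"
proof -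
  have K: "real K > 0" using L(1) by (cases K) (auto simp: L_def)
  have expL: "exp L = real K" using K by (simp add: L_def)
  have m: "0 < m" using K L by (simp add: m_def)
  have "(1 / L) powr (real K / m) = exp (- (L - 2 * ln L))"
  proof -
    have "real K / m = (L - 2 * ln L) / ln L" using K L by (simp add: m_def field_simps)
    then show ?thesis using L by (simp add: powr_def ln_div field_simps)
  qed
  also have "\<dots> = exp (2 * ln L) / exp L" by (simp add: exp_diff)
  also have "\<dots> = L\<^sup>2 / real K"
  proof -
    have "exp (2 * ln L) = L\<^sup>2"
      using L(1) by (simp only: mult_2 exp_add exp_ln power2_eq_square)
    then show ?thesis by (simp add: expL)
  qed
  finally have powr_m: "(1 / L) powr (real K / m) = L\<^sup>2 / real K" .
  have "(1 / L) powr (real K / m) \<le> (1 / L) powr (real K / M)"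
    using L(1) M m K by (intro powr_mono' divide_left_mono) auto
  then have "m * (L\<^sup>2 / real K) \<le> M * (1 / L) powr (real K / M)"
    using M m by (intro mult_mono) (auto simp: powr_m)
  moreover have "m * (L\<^sup>2 / real K) = L\<^sup>2 * ln L / (L - 2 * ln L)"
    using K by (simp add: m_def)
  ultimately have "2 * L \<le> M * (1 / L) powr (real K / M)" using L(4) by linarith
  then have "exp (- (M * (1 / L) powr (real K / M))) \<le> exp (- (2 * L))" by simp
  also have "\<dots> = 1 / real K ^ 2"
    by (simp only: exp_minus mult_2 exp_add expL power2_eq_square inverse_eq_divide)
  finally show ?thesis using K by (simp add: field_simps power2_eq_square)
qed

lemma prob_greedy_num_colors_le_real:
  fixes K :: nat and b :: real
  defines "L \<equiv> ln (real K)"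
  defines "m \<equiv> real K * ln L / (L - 2 * ln L)"
  assumes L: "4 \<le> L" "1 < ln L" "0 < L - 2 * ln L" "2 * L \<le> L\<^sup>2 * ln L / (L - 2 * ln L)"
    and b: "1 \<le> m" "m + 2 \<le> b"
  shows "1 - 1 / real K
         \<le> measure (phase_space K) {\<Theta> \<in> space (phase_space K). real (greedy_num_colors (adjG K \<Theta>) K) \<le> b}"
proof -
  interpret prob_space "phase_space K"
    unfolding phase_space_def by (rule prob_space_PiM[OF prob_space_uniform_phase])
  define M where "M = nat \<lfloor>b\<rfloor> - 1"
  have M: "m \<le> real M" "real M + 1 \<le> b" "1 \<le> M" using b by (simp_all add: M_def) linarith+
  have "1 - 1 / real K \<le> 1 - real K * exp (- (real M * (1 / L) powr (real K / real M)))"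
    using exp_neg_mult_inverse_ln_powr_le[OF L[unfolded L_def] M(1)[unfolded m_def L_def]]
    by (simp add: L_def)
  also have "\<dots> \<le> prob {\<Theta> \<in> space (phase_space K). greedy_num_colors (adjG K \<Theta>) K \<le> M + 1}"
    using prob_greedy_num_colors_le[OF L(1)[unfolded L_def] M(3)] by (simp add: L_def)
  also have "\<dots> \<le> prob {\<Theta> \<in> space (phase_space K). real (greedy_num_colors (adjG K \<Theta>) K) \<le> b}"
    using M(2) by (intro finite_measure_mono sets_greedy_num_colors) auto
  finally show ?thesis .
qed

theorem lemma1:
  shows "(\<lambda>K. measure (phase_space K)
            {\<Theta> \<in> space (phase_space K).
               real (greedy_num_colors (adjG K \<Theta>) K)
                 \<le> real K * ln (ln (real K)) / (ln (real K) - 3 * ln (ln (real K))) + 1})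
         \<longlonglongrightarrow> 1" (is "(\<lambda>K. ?p K) \<longlonglongrightarrow> 1")
proof (rule tendsto_sandwich[of "\<lambda>K. 1 - 1 / real K" _ _ "\<lambda>_. 1"])
  have "\<forall>\<^sub>F K in sequentially. 4 \<le> ln (real K)" by real_asymp
  moreover have "\<forall>\<^sub>F K in sequentially. 1 < ln (ln (real K))" by real_asymp
  moreover have "\<forall>\<^sub>F K in sequentially. 0 < ln (real K) - 2 * ln (ln (real K))" by real_asymp
  moreover have "\<forall>\<^sub>F K in sequentially. 2 * ln (real K)
      \<le> ln (real K) ^ 2 * ln (ln (real K)) / (ln (real K) - 2 * ln (ln (real K)))" by real_asymp
  moreover have "\<forall>\<^sub>F K in sequentially.
      1 \<le> real K * ln (ln (real K)) / (ln (real K) - 2 * ln (ln (real K)))" by real_asymp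
  moreover have "\<forall>\<^sub>F K in sequentially. real K * ln (ln (real K)) / (ln (real K) - 2 * ln (ln (real K))) + 2
      \<le> real K * ln (ln (real K)) / (ln (real K) - 3 * ln (ln (real K))) + 1" by real_asymp
  ultimately show "\<forall>\<^sub>F K in sequentially. 1 - 1 / real K \<le> ?p K"
    by eventually_elim (rule prob_greedy_num_colors_le_real)
  show "\<forall>\<^sub>F K in sequentially. ?p K \<le> 1"
    by (intro always_eventually allI prob_space.prob_le_1)
       (simp add: phase_space_def prob_space_PiM prob_space_uniform_phase)
qed real_asymp+

end
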